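(* Let $n\ge4$ be even, let $\gamma\in\mathbb{F}_4\setminus\mathbb{F}_2$, and let $F=\mathrm{Inv}\circ(0,1,\gamma)$ on $\mathbb{F}_{2^n}$. If $c\in\mathbb{F}_4\setminus\mathbb{F}_2$, then ${}_c\Delta_F=3$ if $n\equiv2\pmod4$, ${}_c\Delta_F=4$ if $n\equiv4\pmod8$, and ${}_c\Delta_F=5$ if $n\equiv0\pmod8$.
   Context: $\mathbb{F}_4$ is the subfield of order $4$ of $\mathbb{F}_{2^n}$. $\mathrm{Inv}(x)=x^{2^n-2}$ on $\mathbb{F}_{2^n}$. $(0,1,\gamma)$ is the $3$-cycle sending $0\mapsto1$, $1\mapsto\gamma$, $\gamma\mapsto0$ and fixing all other elements; thus $F(0)=1$, $F(1)=\gamma^{-1}$, $F(\gamma)=0$ and $F(x)=x^{-1}$ otherwise. For $c\in\mathbb{F}_{2^n}$, ${}_cD_aF(x)=F(x+a)+cF(x)$; ${}_c\Delta_F(a,b)$ is the number of $x\in\mathbb{F}_{2^n}$ with ${}_cD_aF(x)=b$; and ${}_c\Delta_F=\max\{{}_c\Delta_F(a,b): a,b\in\mathbb{F}_{2^n},\ a\neq 0 \text{ if } c=1\}$. *)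

theory Defs
  imports Main
begin

text \<open>Finite field F_{2^n} is modelled by a finite field type 'a with CARD('a) = 2^n.\<close>

definition Inv :: "nat \<Rightarrow> 'a::field \<Rightarrow> 'a" where
  "Inv n x = x ^ (2^n - 2)"

definition cyc3 :: "'a::field \<Rightarrow> 'a \<Rightarrow> 'a" where
  "cyc3 g x = (if x = 0 then 1 else if x = 1 then g else if x = g then 0 else x)"

definition cDelta :: "('a::field \<Rightarrow> 'a) \<Rightarrow> 'a \<Rightarrow> 'a \<Rightarrow> 'a \<Rightarrow> nat" where
  "cDelta F c a b = card {x. F (x + a) + c * F x = b}"

definition cDU :: "('a::{field,finite} \<Rightarrow> 'a) \<Rightarrow> 'a \<Rightarrow> nat" where
  "cDU F c = Max {cDelta F c a b | a b. a \<noteq> 0 \<or> c \<noteq> 1}"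

end

(* Translating x by a turns the solutions of F(x + a) + c F(x) = b
   into those for c^-1 and b c^-1, so it suffices to take c = g.  For a = 0 there is at most one
   solution since F is injective.  For a /= 0, away from the six exceptional points where x or
   x + a lies in {0, 1, g}, the equation is the quadratic b x (x + a) = x + g (x + a), so it has
   at most two generic solutions.  Each exceptional point is a solution for exactly one b, and two
   of them share their b only if a is a root of one of a few quadratics over F4, each of which
   says that an F4-multiple of a solves z^2 + z = g or z^2 + z = g + 1.  By Artin-Schreier theory
   this depends on the absolute trace, and Tr(g) = Tr(g + 1) = n/2 mod 2.  So for n = 2 (mod 4)
   at most one exceptional solution occurs.  In general at most three occur, and three only if
   a^2 = g a + 1 (so a generates GF(16)) and b = a; then the generic solutions come from
   z^2 + z = a g, which is solvable iff n/4 is even. *)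

theory Submission
  imports Defs "HOL-Computational_Algebra.Polynomial"
begin

section \<open>Finite fields of characteristic two\<close>

lemma power_card_eq_self:
  fixes x :: "'a::{field,finite}"
  shows "x ^ card (UNIV :: 'a set) = x"
proof (cases "x = 0")
  case False
  let ?U = "UNIV - {0::'a}"
  have "bij_betw (\<lambda>y. x * y) ?U ?U"
    by (rule bij_betw_byWitness[where f' = "\<lambda>y. y / x"]) (use False in \<open>simp_all add: image_subset_iff\<close>)
  then have "(\<Prod>y\<in>?U. x * y) = (\<Prod>y\<in>?U. y)"
    using prod.reindex_bij_betw[of "\<lambda>y. x * y" ?U ?U "\<lambda>y. y"] by simp
  then have "x ^ card ?U = 1"
    by (simp add: prod.distrib)
  moreover have "card (UNIV :: 'a set) = Suc (card ?U)"
    by (simp add: card_Diff_singleton card_gt_0_iff)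
  ultimately show ?thesis
    by (simp only: power_Suc mult_1_right)
qed (simp add: card_gt_0_iff)

lemma CHAR_eq_2_if_card_pow2:
  assumes "card (UNIV :: 'a::{field,finite} set) = 2 ^ n" and "n \<noteq> 0"
  shows "CHAR('a) = 2"
proof -
  have "(-1::'a) ^ 2 ^ n = -1"
    using power_card_eq_self[of "-1::'a"] assms(1) by simp
  then have "(1::'a) = -1"
    using assms(2) by simp
  then have "of_nat 2 = (0::'a)"
    by (metis add.right_inverse of_nat_1 of_nat_add one_add_one)
  then have "CHAR('a) dvd 2"
    by (simp only: of_nat_eq_0_iff_char_dvd)
  moreover have "CHAR('a) \<noteq> 1"
    by simp
  ultimately show ?thesis
    using dvd_imp_le[of "CHAR('a)" 2] by (cases "CHAR('a)") auto
qed

lemma two_eq_zero_CHAR_2: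
  assumes "CHAR('a::ring_1) = 2"
  shows "(2::'a) = 0"
  using of_nat_CHAR[where 'a='a] assms by simp

lemma add_self_CHAR_2:
  fixes x :: "'a::ring_1"
  assumes "CHAR('a) = 2"
  shows "x + x = 0"
  by (simp flip: mult_2 add: two_eq_zero_CHAR_2[OF assms])

lemma power2_add_CHAR_2:
  fixes x y :: "'a::comm_ring_1"
  assumes "CHAR('a) = 2"
  shows "(x + y) ^ 2 = x ^ 2 + y ^ 2"
  by (simp add: power2_sum two_eq_zero_CHAR_2[OF assms])

lemma power2_sum_CHAR_2:
  fixes f :: "'b \<Rightarrow> 'a::comm_ring_1"
  assumes "CHAR('a) = 2"
  shows "(\<Sum>i\<in>A. f i) ^ 2 = (\<Sum>i\<in>A. f i ^ 2)"
  by (induction A rule: infinite_finite_induct) (simp_all add: power2_add_CHAR_2[OF assms])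

lemma of_nat_CHAR_2:
  assumes "CHAR('a::ring_1) = 2"
  shows "(of_nat j :: 'a) = (if even j then 0 else 1)"
  by (induction j) (auto simp: add_self_CHAR_2[OF assms])

lemma F4_generator_square:
  fixes x :: "'a::field"
  assumes "CHAR('a) = 2" and "x ^ 4 = x" and "x \<noteq> 0" and "x \<noteq> 1"
  shows "x ^ 2 = x + 1"
proof -
  have "x * x ^ 3 = x * 1"
    using assms(2) by (simp add: eval_nat_numeral)
  then have "x ^ 3 = 1"
    using assms(3) mult_cancel_left by blast
  have "(x + 1) * (x ^ 2 + x + 1) = x ^ 3 + 1 + 2 * (x ^ 2 + x)"
    by (simp add: algebra_simps power2_eq_square power3_eq_cube)
  then have "(x + 1) * (x ^ 2 + x + 1) = 0"
    by (simp add: \<open>x ^ 3 = 1\<close> two_eq_zero_CHAR_2[OF assms(1)] add_self_CHAR_2[OF assms(1)])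
  moreover have "x + 1 \<noteq> 0"
    using assms(4) by (metis add_eq_0_iff uminus_CHAR_2[OF assms(1)])
  ultimately have "x ^ 2 + x + 1 = 0"
    by simp
  then show ?thesis
    by (metis add.assoc add_eq_0_iff uminus_CHAR_2[OF assms(1)])
qed

section \<open>The absolute trace and Artin--Schreier equations\<close>

(* For m = n this is the absolute trace of GF(2^n) over GF(2). *)
definition abs_trace :: "nat \<Rightarrow> 'a::comm_ring_1 \<Rightarrow> 'a" where
  "abs_trace m d = (\<Sum>i<m. d ^ 2 ^ i)"

lemma abs_trace_Suc:
  fixes d :: "'a::comm_ring_1"
  assumes "CHAR('a) = 2"
  shows "abs_trace (Suc m) d = d + abs_trace m d ^ 2"
proof -
  have "(d ^ 2 ^ i) ^ 2 = d ^ 2 ^ Suc i" for i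
    by (simp flip: power_mult add: mult.commute)
  then show ?thesis
    unfolding abs_trace_def power2_sum_CHAR_2[OF assms] by (subst sum.lessThan_Suc_shift) simp
qed

lemma artin_schreier_power_pow2:
  fixes z :: "'a::comm_ring_1"
  assumes "CHAR('a) = 2"
  shows "z ^ 2 ^ m = z + abs_trace m (z ^ 2 + z)"
proof (induction m)
  case 0
  then show ?case by (simp add: abs_trace_def)
next
  case (Suc m)
  have "z ^ 2 ^ Suc m = (z ^ 2 ^ m) ^ 2"
    by (simp add: power_mult[symmetric] mult.commute)
  also have "\<dots> = z ^ 2 + abs_trace m (z ^ 2 + z) ^ 2"
    by (simp add: Suc power2_add_CHAR_2[OF assms])
  also have "\<dots> = z + abs_trace (Suc m) (z ^ 2 + z)"
    by (simp add: abs_trace_Suc[OF assms] add.assoc two_eq_zero_CHAR_2[OF assms] flip: mult_2)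
  finally show ?case .
qed

lemma abs_trace_artin_schreier:
  assumes "card (UNIV :: 'a::{field,finite} set) = 2 ^ n" and "n \<noteq> 0"
  shows "abs_trace n (z ^ 2 + z :: 'a) = 0"
  using artin_schreier_power_pow2[OF CHAR_eq_2_if_card_pow2[OF assms], of z n]
    power_card_eq_self[of z] assms(1) by simp

lemma card_abs_trace_roots:
  assumes "n \<noteq> 0"
  shows "card {d :: 'a::field. abs_trace n d = 0} \<le> 2 ^ (n - 1)"
proof -
  define P where "P = (\<Sum>i<n. monom (1::'a) (2 ^ i))"
  have poly_P: "poly P d = abs_trace n d" for d
    by (simp add: P_def abs_trace_def poly_sum poly_monom)
  have "degree (\<Sum>i<n - 1. monom (1::'a) (2 ^ i)) < 2 ^ (n - 1)"
  proof (cases "n = 1")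
    case False
    have "degree (\<Sum>i<n - 1. monom (1::'a) (2 ^ i)) \<le> 2 ^ (n - 2)"
      by (rule degree_sum_le) (auto intro: order_trans[OF degree_monom_le] power_increasing)
    also have "(2::nat) ^ (n - 2) < 2 ^ (n - 1)"
      using assms False by simp
    finally show ?thesis .
  qed simp
  moreover have "P = monom 1 (2 ^ (n - 1)) + (\<Sum>i<n - 1. monom (1::'a) (2 ^ i))"
    using assms unfolding P_def by (cases n) (simp_all add: add.commute)
  ultimately have deg_P: "degree P = 2 ^ (n - 1)"
    by (simp add: degree_add_eq_left degree_monom_eq)
  then have "P \<noteq> 0"
    by (metis degree_0 power_not_zero zero_neq_numeral)
  then have "card {d. poly P d = 0} \<le> degree P"
    by (rule card_poly_roots_bound)
  then show ?thesis
    using poly_P deg_P by simp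
qed

lemma artin_schreier_fiber:
  fixes z :: "'a::field"
  assumes "CHAR('a) = 2"
  shows "{w. w ^ 2 + w = z ^ 2 + z} = {z, z + 1}"
proof (rule set_eqI)
  fix w
  have "w ^ 2 + w - (z ^ 2 + z) = (w - z) * (w - (z + 1))"
    by (simp add: algebra_simps power2_eq_square two_eq_zero_CHAR_2[OF assms])
  then have "w ^ 2 + w = z ^ 2 + z \<longleftrightarrow> (w - z) * (w - (z + 1)) = 0"
    by (simp only: eq_iff_diff_eq_0[of "w ^ 2 + w"])
  then show "w \<in> {w. w ^ 2 + w = z ^ 2 + z} \<longleftrightarrow> w \<in> {z, z + 1}"
    by simp
qed

lemma card_artin_schreier_image:
  assumes "card (UNIV :: 'a::{field,finite} set) = 2 ^ n" and "n \<noteq> 0"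
  shows "card (range (\<lambda>z::'a. z ^ 2 + z)) = 2 ^ (n - 1)"
proof -
  let ?f = "\<lambda>z::'a. z ^ 2 + z"
  have "card (UNIV :: 'a set) = (\<Sum>d\<in>range ?f. card (?f -` {d}))"
    by (subst card_UN_disjoint[symmetric]) (auto intro: arg_cong[where f = card])
  also have "\<dots> = (\<Sum>d\<in>range ?f. 2)"
  proof (rule sum.cong)
    fix d assume "d \<in> range ?f"
    then obtain z where "d = ?f z" by auto
    then have "?f -` {d} = {z, z + 1}"
      using artin_schreier_fiber[OF CHAR_eq_2_if_card_pow2[OF assms]] by auto
    then show "card (?f -` {d}) = 2" by simp
  qed simp
  finally show ?thesis
    using assms by (cases n) simp_all
qed

lemma artin_schreier_solvable_iff:
  assumes "card (UNIV :: 'a::{field,finite} set) = 2 ^ n" and "n \<noteq> 0"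
  shows "(\<exists>z. z ^ 2 + z = d) \<longleftrightarrow> abs_trace n (d::'a) = 0"
proof -
  have "range (\<lambda>z::'a. z ^ 2 + z) \<subseteq> {d. abs_trace n d = 0}"
    using abs_trace_artin_schreier[OF assms] by auto
  moreover have "card {d :: 'a. abs_trace n d = 0} \<le> card (range (\<lambda>z::'a. z ^ 2 + z))"
    using card_abs_trace_roots[OF assms(2)] card_artin_schreier_image[OF assms] by simp
  ultimately have "range (\<lambda>z::'a. z ^ 2 + z) = {d. abs_trace n d = 0}"
    by (intro card_seteq) auto
  then show ?thesis
    by (metis (mono_tags, lifting) mem_Collect_eq rangeE rangeI)
qed

lemma abs_trace_add:
  fixes d :: "'a::comm_ring_1"
  assumes "d ^ 2 ^ k = d"
  shows "abs_trace (k + m) d = abs_trace k d + abs_trace m d"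
proof (induction m)
  case (Suc m)
  have "d ^ 2 ^ (k + m) = d ^ 2 ^ m"
    by (simp add: power_add power_mult assms)
  then show ?case
    using Suc by (simp add: abs_trace_def add.assoc)
qed (simp add: abs_trace_def)

lemma abs_trace_mult:
  fixes d :: "'a::comm_ring_1"
  assumes "d ^ 2 ^ k = d"
  shows "abs_trace (j * k) d = of_nat j * abs_trace k d"
  by (induction j) (simp_all add: abs_trace_add[OF assms] algebra_simps, simp add: abs_trace_def)

section \<open>c-differential uniformity\<close>

lemma Inv_eq_inverse:
  assumes "card (UNIV :: 'a::{field,finite} set) = 2 ^ n" and "2 \<le> n"
  shows "Inv n (x::'a) = inverse x"
proof -
  have "(2::nat) ^ 1 < 2 ^ n"
    using assms(2) by (intro power_strict_increasing) simp_all
  then have card_gt_2: "2 < card (UNIV :: 'a set)"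
    using assms(1) by simp
  show ?thesis
  proof (cases "x = 0")
    case False
    have "x ^ (2 ^ n - 2) * x * x = x ^ (2 ^ n - 2 + 2)"
      by (simp add: power_add power2_eq_square mult.assoc)
    also have "2 ^ n - 2 + 2 = card (UNIV :: 'a set)"
      using card_gt_2 assms(1) by simp
    also have "x ^ card (UNIV :: 'a set) = 1 * x"
      by (simp add: power_card_eq_self)
    finally have "x * x ^ (2 ^ n - 2) = 1"
      using False by (metis mult_cancel_right mult.commute)
    then show ?thesis
      unfolding Inv_def by (rule inverse_unique[symmetric])
  qed (use card_gt_2 assms(1) in \<open>simp add: Inv_def\<close>)
qed

lemma cDelta_inverse:
  fixes F :: "'a::field \<Rightarrow> 'a"
  assumes "CHAR('a) = 2" and "c \<noteq> 0"
  shows "cDelta F (inverse c) a b = cDelta F c a (b * c)"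
proof -
  \<comment> \<open>the translation by a swaps the roles of x and x + a\<close>
  have shift: "y + a + a = y" for y
    by (simp add: add.assoc add_self_CHAR_2[OF assms(1)])
  have "c * (F (x + a) + inverse c * F x) = F (x + a + a) + c * F (x + a)" for x
    unfolding shift using assms(2) by (simp add: distrib_left add.commute)
  then have "F (x + a) + inverse c * F x = b \<longleftrightarrow> F (x + a + a) + c * F (x + a) = b * c" for x
    using assms(2) by (metis mult.commute mult_left_cancel)
  then have "{x. F (x + a) + c * F x = b * c} = (\<lambda>x. x + a) ` {x. F (x + a) + inverse c * F x = b}"
    using shift by (auto intro: image_eqI[where x = "x + a" for x])
  moreover have "inj (\<lambda>x. x + a)"
    by (simp add: inj_def)
  ultimately show ?thesis
    unfolding cDelta_def by (simp add: card_image inj_on_subset)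
qed

lemma cDU_inverse:
  fixes F :: "'a::{field,finite} \<Rightarrow> 'a"
  assumes "CHAR('a) = 2" and "c \<noteq> 0"
  shows "cDU F (inverse c) = cDU F c"
proof -
  have "inverse c \<noteq> 1 \<longleftrightarrow> c \<noteq> 1"
    by (metis inverse_1 inverse_inverse_eq)
  moreover have "cDelta F c a b = cDelta F (inverse c) a (b * inverse c)" for a b
    using cDelta_inverse[OF assms, of F a "b * inverse c"] assms(2) by (simp add: mult.assoc)
  ultimately have "{cDelta F (inverse c) a b | a b. a \<noteq> 0 \<or> inverse c \<noteq> 1}
      = {cDelta F c a b | a b. a \<noteq> 0 \<or> c \<noteq> 1}"
    using cDelta_inverse[OF assms, of F] by blast
  then show ?thesis
    unfolding cDU_def by simp
qed

lemma cDU_eqI: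
  fixes F :: "'a::{field,finite} \<Rightarrow> 'a"
  assumes "\<And>a b. a \<noteq> 0 \<or> c \<noteq> 1 \<Longrightarrow> cDelta F c a b \<le> m"
    and "a \<noteq> 0 \<or> c \<noteq> 1" and "m \<le> cDelta F c a b"
  shows "cDU F c = m"
proof -
  let ?S = "{cDelta F c a b | a b. a \<noteq> 0 \<or> c \<noteq> 1}"
  have "?S \<subseteq> range (\<lambda>(a, b). cDelta F c a b)"
    by auto
  then have "finite ?S"
    by (rule finite_subset) simp
  moreover have "cDelta F c a b = m"
    using assms by (simp add: le_antisym)
  then have "m \<in> ?S"
    using assms(2) by blast
  ultimately show ?thesis
    unfolding cDU_def using assms(1) by (intro Max_eqI) blast+
qed

section \<open>The equation F(x + a) + g F(x) = b for F = Inv o (0,1,g)\<close>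

locale inverse_cycle3 =
  fixes g :: "'a::{field,finite}" and n :: nat
  assumes card_UNIV: "card (UNIV :: 'a set) = 2 ^ n"
    and n_ge_4: "4 \<le> n" and even_n: "even n"
    and g_square: "g ^ 2 = g + 1"
begin

lemma CHAR_2: "CHAR('a) = 2"
  using CHAR_eq_2_if_card_pow2[OF card_UNIV] n_ge_4 by simp

lemma add_self [simp]: "x + x = (0::'a)"
  by (rule add_self_CHAR_2[OF CHAR_2])

lemma add_self_left [simp]: "x + (x + y) = (y::'a)"
  by (simp flip: add.assoc)

lemma two_eq_0 [simp]: "(2::'a) = 0"
  by (rule two_eq_zero_CHAR_2[OF CHAR_2])

lemma add_eq_0_iff_eq: "x + y = 0 \<longleftrightarrow> x = (y::'a)"
  by (metis add_self add_self_left add.commute add_0_right)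

lemma add_right_eq_iff: "x + y = z \<longleftrightarrow> x = z + (y::'a)"
  by (metis add_self_left add.commute)

abbreviation F4 :: "'a set" where
  "F4 \<equiv> {0, 1, g, g + 1}"

lemma g_mult_g: "g * g = g + 1"
  using g_square by (simp add: power2_eq_square)

lemma g_mult_g_mult: "g * (g * x) = g * x + x"
  by (simp add: g_mult_g distrib_right flip: mult.assoc)

lemmas F4_simps = g_mult_g g_mult_g_mult algebra_simps

lemma F4_add_table:
  "1 + g = g + 1" "g + (g + 1) = 1" "1 + (g + 1) = g" "g + 1 + 1 = g" "g + 1 + g = 1"
  "g * (g + 1) = 1" "(g + 1) * g = 1" "(g + 1) * (g + 1) = g"
  by (simp_all add: F4_simps)

lemma F4_distinct [simp]:
  "g \<noteq> 0" "g \<noteq> 1" "g + 1 \<noteq> 0" "g + 1 \<noteq> 1" "g + 1 \<noteq> g"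
  "0 \<noteq> g" "1 \<noteq> g" "0 \<noteq> g + 1" "1 \<noteq> g + 1" "g \<noteq> g + 1" "1 + g \<noteq> 0"
  using g_mult_g by (auto simp: add_eq_0_iff_eq)

lemma inverse_g: "inverse g = g + 1"
  by (rule inverse_unique) (simp add: F4_simps)

lemma inverse_g_plus_1: "inverse (g + 1) = g"
  by (simp flip: inverse_g)

lemma g_mult_eq_1_iff: "g * x = 1 \<longleftrightarrow> x = g + 1"
  by (metis inverse_g inverse_unique F4_distinct(1) right_inverse)

lemma inverse_F4: "x \<in> F4 \<Longrightarrow> inverse x \<in> F4"
  by (auto simp: inverse_g inverse_g_plus_1)

lemma F4_generator_cases:
  assumes "c ^ 2 = c + 1"
  shows "c = g \<or> c = g + 1"
proof -
  have "(c + g) * (c + (g + 1)) = c ^ 2 + c + 1"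
    by (simp add: power2_eq_square F4_simps)
  then show ?thesis
    using assms by (simp add: add_eq_0_iff_eq)
qed

lemma exists_not_F4: "\<exists>z. z \<notin> F4"
proof (rule ccontr)
  assume "\<nexists>z. z \<notin> F4"
  then have "card (UNIV :: 'a set) \<le> card F4"
    by (intro card_mono) auto
  also have "\<dots> \<le> 4"
    by (rule card_insert_le_m1; simp)+
  finally show False
    using card_UNIV n_ge_4 power_increasing[of 4 n "2::nat"] by simp
qed

lemma artin_schreier_iff: "(\<exists>z. z ^ 2 + z = d) \<longleftrightarrow> abs_trace n d = (0::'a)"
  using artin_schreier_solvable_iff[OF card_UNIV] n_ge_4 by simp

lemma abs_trace_F4:
  assumes "d \<in> {g, g + 1}"
  shows "abs_trace n d = (if 4 dvd n then 0 else 1)"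
proof -
  have "d ^ 2 ^ 2 = d" and "abs_trace 2 d = 1"
    using assms by (auto simp: abs_trace_def eval_nat_numeral F4_simps)
  then have "abs_trace (n div 2 * 2) d = of_nat (n div 2)"
    by (simp add: abs_trace_mult)
  then show ?thesis
    using even_n by (auto simp: of_nat_CHAR_2[OF CHAR_2] elim!: evenE)
qed

(* The roots of a^2 = g a + 1 generate GF(16); they are the only a with three exceptional solutions. *)
lemma F16_rules:
  assumes "a ^ 2 = g * a + 1"
  shows "a * a = g * a + 1" and "a * (a * x) = g * (a * x) + x" and "g * a + 1 \<noteq> 0"
proof -
  show sq: "a * a = g * a + 1"
    using assms by (simp add: power2_eq_square)
  then show "a * (a * x) = g * (a * x) + x"
    by (simp add: distrib_right flip: mult.assoc)
  show "g * a + 1 \<noteq> 0"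
  proof
    assume "g * a + 1 = 0"
    with sq have "a = 0"
      by simp
    with \<open>g * a + 1 = 0\<close> show False
      by simp
  qed
qed

lemma F16_not_F4:
  assumes "a ^ 2 = g * a + 1"
  shows "a \<notin> F4"
  using F16_rules(1)[OF assms] by (auto simp: F4_simps)

lemma F16_inverse: "a ^ 2 = g * a + 1 \<Longrightarrow> a * (a + g) = 1"
  by (simp add: F16_rules F4_simps)

lemma abs_trace_F16:
  assumes "a ^ 2 = g * a + 1" and "4 dvd n"
  shows "abs_trace n (a * g) = (if 8 dvd n then 0 else 1)"
proof -
  note rules = F16_rules[OF assms(1)]
  have squares: "(a * g) ^ 4 = ((a * g) ^ 2) ^ 2" "(a * g) ^ 8 = ((a * g) ^ 4) ^ 2"
    "(a * g) ^ 16 = ((a * g) ^ 8) ^ 2"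
    by (simp_all flip: power_mult)
  have pow2: "(a * g) ^ 2 = a + g + 1"
    by (simp add: power2_eq_square F4_simps rules)
  have pow4: "(a * g) ^ 4 = a * g + g + 1"
    unfolding squares pow2 by (simp add: power2_eq_square F4_simps rules)
  have pow8: "(a * g) ^ 8 = a + 1"
    unfolding squares pow4 by (simp add: power2_eq_square F4_simps rules)
  have pow16: "(a * g) ^ 16 = a * g"
    unfolding squares pow8 by (simp add: power2_eq_square F4_simps rules)
  have trace_4: "abs_trace 4 d = d + d ^ 2 + d ^ 4 + d ^ 8" for d :: 'a
    by (simp add: abs_trace_def numeral_eq_Suc)
  have "abs_trace 4 (a * g) = 1"
    unfolding trace_4 pow2 pow4 pow8 by (simp add: F4_simps)
  with pow16 have "abs_trace (n div 4 * 4) (a * g) = of_nat (n div 4)"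
    using abs_trace_mult[of "a * g" 4 "n div 4"] by simp
  then show ?thesis
    using assms(2) by (auto simp: of_nat_CHAR_2[OF CHAR_2] elim!: dvdE)
qed

definition F :: "'a \<Rightarrow> 'a" where
  "F x = inverse (cyc3 g x)"

lemma Inv_comp_cyc3: "Inv n \<circ> cyc3 g = F"
  using Inv_eq_inverse[OF card_UNIV] n_ge_4 by (auto simp: F_def)

lemma F_0 [simp]: "F 0 = 1" and F_1 [simp]: "F 1 = g + 1" and F_g [simp]: "F g = 0"
  and F_g_plus_1 [simp]: "F (g + 1) = g"
  by (simp_all add: F_def cyc3_def inverse_g inverse_g_plus_1)

lemma F_other: "x \<notin> {0, 1, g} \<Longrightarrow> F x = inverse x"
  by (simp add: F_def cyc3_def)

lemma inj_F: "inj F"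
  unfolding F_def inj_def cyc3_def by (auto split: if_splits)

definition sols :: "'a \<Rightarrow> 'a \<Rightarrow> 'a set" where
  "sols a b = {x. F (x + a) + g * F x = b}"

lemma cDelta_eq_card_sols: "cDelta F g a b = card (sols a b)"
  by (simp add: cDelta_def sols_def)

lemma card_sols_0: "card (sols 0 b) \<le> 1"
proof -
  have "F x + g * F x = b \<longleftrightarrow> F x = inverse (g + 1) * b" for x
    using F4_distinct(3) by (auto simp: algebra_simps field_simps)
  then have "sols 0 b = F -` {inverse (g + 1) * b}"
    by (auto simp: sols_def)
  then show ?thesis
    using inj_F by (simp add: card_le_Suc0_iff_eq inj_def)
qed

(* x is exceptional iff x or x + a lies in {0, 1, g}, where F differs from inversion. *)
definition exceptional :: "'a \<Rightarrow> 'a set" where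
  "exceptional a = {0, 1, g, a, a + 1, a + g}"

(* b x (x + a) = x + g (x + a), i.e. 1/(x + a) + g/x = b with denominators cleared *)
definition generic_poly :: "'a \<Rightarrow> 'a \<Rightarrow> 'a \<Rightarrow> 'a" where
  "generic_poly a b x = b * x ^ 2 + (a * b + 1 + g) * x + a * g"

lemma sols_generic_iff:
  assumes "a \<noteq> 0" and "x \<notin> exceptional a"
  shows "x \<in> sols a b \<longleftrightarrow> generic_poly a b x = 0"
proof -
  have x: "x \<notin> {0, 1, g}" and xa: "x + a \<notin> {0, 1, g}"
    using assms(2) by (auto simp: exceptional_def add_right_eq_iff)
  then have "x * (x + a) \<noteq> 0"
    by auto
  moreover have "F (x + a) + g * F x = (x + g * (x + a)) / (x * (x + a))"
    using x xa by (simp add: F_other field_simps)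
  ultimately have "x \<in> sols a b \<longleftrightarrow> x + g * (x + a) = b * (x * (x + a))"
    unfolding sols_def by (simp add: nonzero_divide_eq_eq)
  also have "\<dots> \<longleftrightarrow> b * (x * (x + a)) + (x + g * (x + a)) = 0"
    by (auto simp only: add_eq_0_iff_eq)
  also have "b * (x * (x + a)) + (x + g * (x + a)) = generic_poly a b x"
    by (simp add: generic_poly_def power2_eq_square F4_simps)
  finally show ?thesis .
qed

lemma card_generic_sols:
  assumes "a \<noteq> 0"
  shows "card (sols a b - exceptional a) \<le> 2"
proof -
  let ?p = "[:a * g, a * b + 1 + g, b:]"
  have "?p \<noteq> 0"
    using assms by simp
  then have "card {x. poly ?p x = 0} \<le> degree ?p"
    by (rule card_poly_roots_bound)
  also have "degree ?p \<le> 2"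
    by simp
  finally have "card {x. poly ?p x = 0} \<le> 2" .
  moreover have "sols a b - exceptional a \<subseteq> {x. poly ?p x = 0}"
    using sols_generic_iff[OF assms] by (auto simp: generic_poly_def algebra_simps power2_eq_square)
  ultimately show ?thesis
    by (meson card_mono finite order_trans)
qed

lemma card_sols_eq:
  "card (sols a b) = card (sols a b \<inter> exceptional a) + card (sols a b - exceptional a)"
  by (metis Int_Diff_Un Int_Diff_disjoint card_Un_disjoint finite)

lemma card_sols_geI:
  assumes "A \<subseteq> sols a b \<inter> exceptional a" and "B \<subseteq> sols a b - exceptional a"
  shows "card A + card B \<le> card (sols a b)"
  using card_mono[OF _ assms(1)] card_mono[OF _ assms(2)] card_sols_eq[of a b] by simp

section \<open>Exceptional solutions\<close>

lemma card_exceptional_sols_F4: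
  assumes "a \<in> {1, g, g + 1}"
  shows "card (sols a b \<inter> exceptional a) \<le> 1"
proof -
  have "inj_on (\<lambda>x. F (x + a) + g * F x) F4"
    using assms by (elim insertE emptyE) (simp_all add: inj_on_insert F4_add_table g_mult_g)
  moreover have "exceptional a = F4"
    using assms by (elim insertE emptyE) (simp_all add: exceptional_def F4_add_table insert_commute)
  ultimately show ?thesis
    by (auto simp: card_le_Suc0_iff_eq sols_def inj_on_def)
qed

lemma exceptional_sols_iff:
  assumes "a \<notin> F4"
  shows "0 \<in> sols a b \<longleftrightarrow> b * a = g * a + 1"
    and "1 \<in> sols a b \<longleftrightarrow> b * (a + 1) = a"
    and "g \<in> sols a b \<longleftrightarrow> b * (a + g) = 1"
    and "a \<in> sols a b \<longleftrightarrow> b * a = a + g"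
    and "a + 1 \<in> sols a b \<longleftrightarrow> b * (a + 1) = (g + 1) * a + 1"
    and "a + g \<in> sols a b \<longleftrightarrow> b * (a + g) = g"
proof -
  have ne: "a \<noteq> 0" "a + 1 \<noteq> 0" "a + g \<noteq> 0"
    using assms by (auto simp: add_eq_0_iff_eq)
  have F: "F a = inverse a" "F (a + 1) = inverse (a + 1)" "F (a + g) = inverse (a + g)"
    using assms by (auto simp: F_other add_right_eq_iff add.commute[of 1 g])
  have shift: "0 + a = a" "1 + a = a + 1" "g + a = a + g" "a + a = 0" "a + 1 + a = 1" "a + g + a = g"
    by (simp_all add: ac_simps)
  have iff: "d \<noteq> 0 \<Longrightarrow> N * inverse d = b \<longleftrightarrow> b * d = N" for d N :: 'a
    by (auto simp: field_simps)
  have "F (0 + a) + g * F 0 = (g * a + 1) * inverse a"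
    unfolding shift F using ne by (simp add: field_simps F4_simps)
  then show "0 \<in> sols a b \<longleftrightarrow> b * a = g * a + 1"
    unfolding sols_def mem_Collect_eq by (simp only: iff[OF ne(1)])
  have "F (1 + a) + g * F 1 = a * inverse (a + 1)"
    unfolding shift F using ne by (simp add: field_simps F4_simps)
  then show "1 \<in> sols a b \<longleftrightarrow> b * (a + 1) = a"
    unfolding sols_def mem_Collect_eq by (simp only: iff[OF ne(2)])
  have "F (g + a) + g * F g = 1 * inverse (a + g)"
    unfolding shift F using ne by (simp add: field_simps F4_simps)
  then show "g \<in> sols a b \<longleftrightarrow> b * (a + g) = 1"
    unfolding sols_def mem_Collect_eq by (simp only: iff[OF ne(3)])
  have "F (a + a) + g * F a = (a + g) * inverse a"
    unfolding shift F using ne by (simp add: field_simps F4_simps)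
  then show "a \<in> sols a b \<longleftrightarrow> b * a = a + g"
    unfolding sols_def mem_Collect_eq by (simp only: iff[OF ne(1)])
  have "F (a + 1 + a) + g * F (a + 1) = ((g + 1) * a + 1) * inverse (a + 1)"
    unfolding shift F using ne by (simp add: field_simps F4_simps)
  then show "a + 1 \<in> sols a b \<longleftrightarrow> b * (a + 1) = (g + 1) * a + 1"
    unfolding sols_def mem_Collect_eq by (simp only: iff[OF ne(2)])
  have "F (a + g + a) + g * F (a + g) = g * inverse (a + g)"
    unfolding shift F using ne by (simp add: field_simps F4_simps)
  then show "a + g \<in> sols a b \<longleftrightarrow> b * (a + g) = g"
    unfolding sols_def mem_Collect_eq by (simp only: iff[OF ne(3)])
qed

(* Two exceptional solutions with b d1 = n1 and b d2 = n2 force n1 d2 = n2 d1, a quadratic in a. *)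
lemma collision_eq_0:
  assumes "b * d1 = n1" and "b * d2 = n2" and "k * r = n1 * d2 + n2 * d1" and "k \<noteq> 0"
  shows "r = (0::'a)"
proof -
  have "n1 * d2 = n2 * d1"
    by (simp flip: assms(1,2) add: ac_simps)
  then show ?thesis
    using assms(3,4) by simp
qed

lemma exceptional_collisions_impossible:
  assumes "a \<notin> F4"
  shows "0 \<in> sols a b \<Longrightarrow> a \<in> sols a b \<Longrightarrow> False"
    and "0 \<in> sols a b \<Longrightarrow> a + g \<in> sols a b \<Longrightarrow> False"
    and "1 \<in> sols a b \<Longrightarrow> a \<in> sols a b \<Longrightarrow> False"
    and "1 \<in> sols a b \<Longrightarrow> a + 1 \<in> sols a b \<Longrightarrow> False"
    and "1 \<in> sols a b \<Longrightarrow> a + g \<in> sols a b \<Longrightarrow> False"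
    and "g \<in> sols a b \<Longrightarrow> a + g \<in> sols a b \<Longrightarrow> False"
    and "a \<in> sols a b \<Longrightarrow> a + 1 \<in> sols a b \<Longrightarrow> False"
    and "a \<in> sols a b \<Longrightarrow> a + g \<in> sols a b \<Longrightarrow> False"
    and "a + 1 \<in> sols a b \<Longrightarrow> a + g \<in> sols a b \<Longrightarrow> False"
proof -
  note sols_iff = exceptional_sols_iff[OF assms]
  have ne: "a \<noteq> 0" "a + 1 \<noteq> 0" "a + g \<noteq> 0" "a + g + 1 \<noteq> 0"
    using assms by (auto simp: add_right_eq_iff add.commute[of 1 g])
  show False if "0 \<in> sols a b" "a \<in> sols a b"
    by (rule notE[OF _ collision_eq_0[OF that[unfolded sols_iff], of "g + 1" "a * (a + 1)"]])
      (simp add: ne, simp add: F4_simps, simp)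
  show False if "0 \<in> sols a b" "a + g \<in> sols a b"
    by (rule notE[OF _ collision_eq_0[OF that[unfolded sols_iff], of "g" "(a + 1) * (a + 1)"]])
      (simp add: ne, simp add: F4_simps, simp)
  show False if "1 \<in> sols a b" "a \<in> sols a b"
    by (rule notE[OF _ collision_eq_0[OF that[unfolded sols_iff], of "g + 1" "a + g + 1"]])
      (simp add: ne, simp add: F4_simps, simp)
  show False if "1 \<in> sols a b" "a + 1 \<in> sols a b"
    by (rule notE[OF _ collision_eq_0[OF that[unfolded sols_iff], of "g" "(a + 1) * (a + g + 1)"]])
      (simp add: ne, simp add: F4_simps, simp)
  show False if "1 \<in> sols a b" "a + g \<in> sols a b"
    by (rule notE[OF _ collision_eq_0[OF that[unfolded sols_iff], of "1" "(a + g + 1) * (a + g + 1)"]])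
      (simp add: ne, simp add: F4_simps, simp)
  show False if "g \<in> sols a b" "a + g \<in> sols a b"
    by (rule notE[OF _ collision_eq_0[OF that[unfolded sols_iff], of "g + 1" "a + g"]])
      (simp add: ne, simp add: F4_simps, simp)
  show False if "a \<in> sols a b" "a + 1 \<in> sols a b"
    by (rule notE[OF _ collision_eq_0[OF that[unfolded sols_iff], of "g" "(a + g) * (a + g + 1)"]])
      (simp add: ne, simp add: F4_simps, simp)
  show False if "a \<in> sols a b" "a + g \<in> sols a b"
    by (rule notE[OF _ collision_eq_0[OF that[unfolded sols_iff], of "1" "(a + 1) * (a + g + 1)"]])
      (simp add: ne, simp add: F4_simps, simp)
  show False if "a + 1 \<in> sols a b" "a + g \<in> sols a b"
    by (rule notE[OF _ collision_eq_0[OF that[unfolded sols_iff], of "g + 1" "a * (a + g + 1)"]])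
      (simp add: ne, simp add: F4_simps, simp)
qed

lemma exceptional_collisions_quadratic:
  assumes "a \<notin> F4"
  shows "0 \<in> sols a b \<Longrightarrow> 1 \<in> sols a b \<Longrightarrow> a ^ 2 + a = g"
    and "g \<in> sols a b \<Longrightarrow> a \<in> sols a b \<Longrightarrow> a ^ 2 + a = g + 1"
    and "1 \<in> sols a b \<Longrightarrow> g \<in> sols a b \<Longrightarrow> (g * a) ^ 2 + g * a = g + 1"
    and "0 \<in> sols a b \<Longrightarrow> g \<in> sols a b \<Longrightarrow> a ^ 2 = g * a + 1"
    and "0 \<in> sols a b \<Longrightarrow> a + 1 \<in> sols a b \<Longrightarrow> a ^ 2 = g * a + 1"
    and "g \<in> sols a b \<Longrightarrow> a + 1 \<in> sols a b \<Longrightarrow> a ^ 2 = g * a + 1"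
proof -
  note sols_iff = exceptional_sols_iff[OF assms]
  note collision = collision_eq_0[THEN add_eq_0_iff_eq[THEN iffD1]]
  show "a ^ 2 + a = g" if "0 \<in> sols a b" "1 \<in> sols a b"
    by (rule collision[OF that[unfolded sols_iff], of "g + 1"]) (simp_all add: F4_simps power2_eq_square)
  show "a ^ 2 + a = g + 1" if "g \<in> sols a b" "a \<in> sols a b"
    by (rule collision[OF that[unfolded sols_iff], of "1"]) (simp_all add: F4_simps power2_eq_square)
  show "(g * a) ^ 2 + g * a = g + 1" if "1 \<in> sols a b" "g \<in> sols a b"
    by (rule collision[OF that[unfolded sols_iff], of "g"]) (simp_all add: F4_simps power2_eq_square)
  show "a ^ 2 = g * a + 1" if "0 \<in> sols a b" "g \<in> sols a b"
    by (rule collision[OF that[unfolded sols_iff], of "g"]) (simp_all add: F4_simps power2_eq_square)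
  show "a ^ 2 = g * a + 1" if "0 \<in> sols a b" "a + 1 \<in> sols a b"
    by (rule collision[OF that[unfolded sols_iff], of "1"]) (simp_all add: F4_simps power2_eq_square)
  show "a ^ 2 = g * a + 1" if "g \<in> sols a b" "a + 1 \<in> sols a b"
    by (rule collision[OF that[unfolded sols_iff], of "g + 1"]) (simp_all add: F4_simps power2_eq_square)
qed

lemma card_exceptional_sols_split:
  assumes "a \<notin> F4"
  shows "card (sols a b \<inter> exceptional a)
      \<le> card (sols a b \<inter> {0, a}) + card (sols a b \<inter> {1, a + 1}) + card (sols a b \<inter> {g, a + g})"
    and "card (sols a b \<inter> {0, a}) \<le> 1" and "card (sols a b \<inter> {1, a + 1}) \<le> 1"
    and "card (sols a b \<inter> {g, a + g}) \<le> 1"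
proof -
  let ?S = "sols a b"
  have split: "?S \<inter> exceptional a = ?S \<inter> {0, a} \<union> ?S \<inter> {1, a + 1} \<union> ?S \<inter> {g, a + g}"
    by (auto simp: exceptional_def)
  show "card (?S \<inter> exceptional a)
      \<le> card (?S \<inter> {0, a}) + card (?S \<inter> {1, a + 1}) + card (?S \<inter> {g, a + g})"
    unfolding split using card_Un_le[of "?S \<inter> {0, a} \<union> ?S \<inter> {1, a + 1}" "?S \<inter> {g, a + g}"]
      card_Un_le[of "?S \<inter> {0, a}" "?S \<inter> {1, a + 1}"] by linarith
  have pair: "card (?S \<inter> {x, y}) \<le> 1" if "x \<in> ?S \<Longrightarrow> y \<in> ?S \<Longrightarrow> False" for x y
    using that by (auto simp: card_le_Suc0_iff_eq)
  note impossible = exceptional_collisions_impossible[OF assms, of b]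
  show "card (?S \<inter> {0, a}) \<le> 1" "card (?S \<inter> {1, a + 1}) \<le> 1" "card (?S \<inter> {g, a + g}) \<le> 1"
    by (rule pair, erule (1) impossible)+
qed

lemma card_exceptional_sols_le_3:
  assumes "a \<notin> F4"
  shows "card (sols a b \<inter> exceptional a) \<le> 3"
  using card_exceptional_sols_split[OF assms, of b] by linarith

lemma three_exceptional_sols_imp_F16:
  assumes "a \<notin> F4" and "3 \<le> card (sols a b \<inter> exceptional a)"
  shows "a ^ 2 = g * a + 1" and "b = a"
proof -
  let ?S = "sols a b"
  note impossible = exceptional_collisions_impossible[OF assms(1), of b]
  have "card (?S \<inter> {0, a}) \<noteq> 0" "card (?S \<inter> {1, a + 1}) \<noteq> 0" "card (?S \<inter> {g, a + g}) \<noteq> 0"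
    using card_exceptional_sols_split[OF assms(1), of b] assms(2) by linarith+
  then have "?S \<inter> {0, a} \<noteq> {}" "?S \<inter> {1, a + 1} \<noteq> {}" "?S \<inter> {g, a + g} \<noteq> {}"
    by (metis card.empty)+
  then have "0 \<in> ?S" and "g \<in> ?S"
    using impossible(2,3,7) by blast+
  then show q: "a ^ 2 = g * a + 1"
    by (rule exceptional_collisions_quadratic(4)[OF assms(1)])
  have "b * a = a * a"
    using \<open>0 \<in> ?S\<close> q by (simp add: exceptional_sols_iff[OF assms(1)] power2_eq_square mult.commute)
  then show "b = a"
    using assms(1) by simp
qed

lemma two_exceptional_sols_imp_artin_schreier:
  assumes "a \<notin> F4" and "2 \<le> card (sols a b \<inter> exceptional a)"
  shows "\<exists>z. z ^ 2 + z = g \<or> z ^ 2 + z = g + 1"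
proof -
  obtain x y where xy: "x \<in> sols a b \<inter> exceptional a" "y \<in> sols a b \<inter> exceptional a" "x \<noteq> y"
    using assms(2) by (metis One_nat_def card_le_Suc0_iff_eq finite not_less_eq_eq numeral_2_eq_2)
  then have "a ^ 2 + a = g \<or> a ^ 2 + a = g + 1 \<or> (g * a) ^ 2 + g * a = g + 1 \<or> a ^ 2 = g * a + 1"
    using exceptional_collisions_impossible[OF assms(1), of b]
      exceptional_collisions_quadratic[OF assms(1), of b]
    unfolding exceptional_def by blast
  moreover have "((g + 1) * a) ^ 2 + (g + 1) * a = g" if "a ^ 2 = g * a + 1"
    by (simp add: power2_eq_square F4_simps F16_rules[OF that])
  ultimately show ?thesis
    by blast
qed

section \<open>Generic solutions for b = 1/(a + g)\<close>

(* (a + g) * generic_poly a b when b (a + g) = 1; every extremal example uses such a b. *)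
definition reduced_poly :: "'a \<Rightarrow> 'a \<Rightarrow> 'a" where
  "reduced_poly a y = y ^ 2 + (g * a + 1) * y + g * a * (a + g)"

lemma reduced_poly_exceptional:
  assumes "a \<notin> F4" and "x \<in> exceptional a"
  shows "reduced_poly a x \<noteq> 0"
proof -
  have ne: "a \<noteq> 0" "a + g \<noteq> 0" "a + (g + 1) \<noteq> 0"
    using assms(1) by (auto simp: add_eq_0_iff_eq)
  have "reduced_poly a 0 = g * (a * (a + g))" "reduced_poly a 1 = g * (a * (a + (g + 1)))"
    "reduced_poly a g = g * ((a + g) * (a + g))" "reduced_poly a a = a * (a + g)"
    "reduced_poly a (a + 1) = a * a" "reduced_poly a (a + g) = (a + g) * (a + (g + 1))"
    by (simp_all add: reduced_poly_def power2_eq_square F4_simps)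
  with assms(2) ne show ?thesis
    unfolding exceptional_def by (elim insertE emptyE) simp_all
qed

lemma generic_sols_eq_reduced_roots:
  assumes "a \<notin> F4" and "b * (a + g) = 1"
  shows "sols a b - exceptional a = {y. reduced_poly a y = 0}"
proof -
  have "a \<noteq> 0" "a + g \<noteq> 0"
    using assms(1) by (auto simp: add_eq_0_iff_eq)
  have "(a + g) * generic_poly a b y = (b * (a + g)) * (y ^ 2 + a * y) + (a + g) * ((1 + g) * y + a * g)" for y
    by (simp add: generic_poly_def algebra_simps power2_eq_square)
  then have "(a + g) * generic_poly a b y = reduced_poly a y" for y
    unfolding assms(2) by (simp add: reduced_poly_def power2_eq_square F4_simps)
  then have "generic_poly a b y = 0 \<longleftrightarrow> reduced_poly a y = 0" for y
    using \<open>a + g \<noteq> 0\<close> by (metis mult_eq_0_iff)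
  then show ?thesis
    using sols_generic_iff[OF \<open>a \<noteq> 0\<close>] reduced_poly_exceptional[OF assms(1)] by blast
qed

lemma reduced_poly_F16:
  assumes "a ^ 2 = g * a + 1"
  shows "reduced_poly a ((g * a + 1) * w) = (a + g) * (w ^ 2 + w + a * g)"
  by (simp add: reduced_poly_def power2_eq_square F4_simps F16_rules[OF assms])

lemma F16_exceptional_sols:
  assumes "a ^ 2 = g * a + 1"
  shows "{0, g, a + 1} \<subseteq> sols a a"
  using exceptional_sols_iff[OF F16_not_F4[OF assms], of a]
  by (simp add: power2_eq_square F4_simps F16_rules[OF assms])

lemma card_sols_F4:
  assumes "a \<in> F4"
  shows "card (sols a b) \<le> 3"
proof (cases "a = 0")
  case False
  then show ?thesis
    using assms card_sols_eq[of a b] card_exceptional_sols_F4[of a b] card_generic_sols[of a b]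
    by simp
qed (use card_sols_0[of b] in simp)

lemma card_sols_le_5: "card (sols a b) \<le> 5"
proof (cases "a \<in> F4")
  case False
  then have "a \<noteq> 0"
    by simp
  then show ?thesis
    using card_sols_eq[of a b] card_exceptional_sols_le_3[OF False, of b] card_generic_sols[of a b]
    by linarith
qed (use card_sols_F4[of a b] in simp)

lemma card_sols_le_3:
  assumes "n mod 4 = 2"
  shows "card (sols a b) \<le> 3"
proof (cases "a \<in> F4")
  case False
  then have "a \<noteq> 0"
    by simp
  have "\<not> 4 dvd n"
    using assms by presburger
  then have "\<not> (\<exists>z. z ^ 2 + z = d)" if "d \<in> {g, g + 1}" for d
    using abs_trace_F4[OF that] by (simp add: artin_schreier_iff)
  then have "\<not> 2 \<le> card (sols a b \<inter> exceptional a)"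
    using two_exceptional_sols_imp_artin_schreier[OF False, of b] by blast
  then show ?thesis
    using card_sols_eq[of a b] card_generic_sols[OF \<open>a \<noteq> 0\<close>, of b] by linarith
qed (use card_sols_F4[of a b] in simp)

lemma card_sols_le_4:
  assumes "n mod 8 = 4"
  shows "card (sols a b) \<le> 4"
proof (cases "a \<in> F4")
  case False
  then have "a \<noteq> 0"
    by simp
  show ?thesis
  proof (cases "3 \<le> card (sols a b \<inter> exceptional a)")
    case True
    then have F16: "a ^ 2 = g * a + 1" and "b = a"
      using three_exceptional_sols_imp_F16[OF False] by blast+
    have "4 dvd n" "\<not> 8 dvd n"
      using assms by presburger+
    then have no_root: "w ^ 2 + w + a * g \<noteq> 0" for w
      using abs_trace_F16[OF F16] artin_schreier_iff[of "a * g"] by (auto simp: add_eq_0_iff_eq)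
    have "reduced_poly a y \<noteq> 0" for y
      using reduced_poly_F16[OF F16, of "y / (g * a + 1)"] F16_rules(3)[OF F16] no_root
        \<open>a \<notin> F4\<close> by (auto simp: add_eq_0_iff_eq)
    then have "card (sols a b - exceptional a) = 0"
      using generic_sols_eq_reduced_roots[OF False F16_inverse[OF F16]] \<open>b = a\<close> by simp
    then show ?thesis
      using card_sols_eq[of a b] card_exceptional_sols_le_3[OF False, of b] by linarith
  next
    case False
    then show ?thesis
      using card_sols_eq[of a b] card_generic_sols[OF \<open>a \<noteq> 0\<close>, of b] by linarith
  qed
qed (use card_sols_F4[of a b] in simp)

lemma exists_artin_schreier_shift_not_F4:
  assumes "n mod 4 = 2"
  shows "\<exists>z. z ^ 2 + z + g \<notin> F4"
proof -
  obtain z where z: "z \<notin> F4"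
    using exists_not_F4 by blast
  have "\<not> 4 dvd n"
    using assms by presburger
  then have "\<not> (\<exists>w. w ^ 2 + w = d)" if "d \<in> {g, g + 1}" for d
    using abs_trace_F4[OF that] by (simp add: artin_schreier_iff)
  then have "z ^ 2 + z \<noteq> g" "z ^ 2 + z \<noteq> g + 1"
    by blast+
  moreover have "z ^ 2 + z \<noteq> 0"
    using z artin_schreier_fiber[OF CHAR_2, of 0] by auto
  moreover have "z ^ 2 + z \<noteq> 1"
    using z artin_schreier_fiber[OF CHAR_2, of g] by (auto simp: power2_eq_square g_mult_g F4_add_table)
  moreover have "z ^ 2 + z = (z ^ 2 + z + g) + g"
    by (simp add: add.assoc)
  ultimately show ?thesis
    by (metis F4_add_table(1,5) add_self add_0 insertE singletonD)
qed

(* With g a + 1 = (g + 1) / t the roots of reduced_poly a can be written down. *)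
lemma three_sols_of_shift:
  assumes "t = z ^ 2 + z + g" and "t \<notin> F4"
  defines "a \<equiv> g * inverse t + g + 1"
  shows "3 \<le> card (sols a (inverse (a + g)))"
proof -
  define i where "i = inverse t"
  have "i \<notin> F4"
    using inverse_F4[of i] assms(2) by (auto simp: i_def)
  have it: "i * t = 1"
    using assms(2) by (auto simp: i_def)
  have "i = (g + 1) * (a + g + 1)"
    by (simp add: a_def i_def F4_simps)
  then have a_notin: "a \<notin> F4"
    using \<open>i \<notin> F4\<close> by (auto simp: F4_simps)
  then have "a + g \<noteq> 0"
    by (auto simp: add_eq_0_iff_eq)
  then have b: "inverse (a + g) * (a + g) = 1"
    by simp
  define y where "y = g + (g + 1) * i * z ^ 2"
  have "reduced_poly a y = g * (i * t) * (i * t) + i * i * (g * (z ^ 2) ^ 2 + g * z ^ 2 + 1)"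
    unfolding it by (simp add: reduced_poly_def y_def a_def i_def power2_eq_square F4_simps)
  also have "\<dots> = 0"
    by (simp add: assms(1) power2_eq_square F4_simps)
  finally have "reduced_poly a y = 0" .
  moreover have "reduced_poly a (y + (g + 1) * i) = reduced_poly a y"
    by (simp add: reduced_poly_def a_def i_def power2_eq_square F4_simps)
  ultimately have "{y, y + (g + 1) * i} \<subseteq> sols a (inverse (a + g)) - exceptional a"
    unfolding generic_sols_eq_reduced_roots[OF a_notin b] by simp
  moreover have "{g} \<subseteq> sols a (inverse (a + g)) \<inter> exceptional a"
    using b exceptional_sols_iff(3)[OF a_notin] by (simp add: exceptional_def)
  ultimately have "card {g} + card {y, y + (g + 1) * i} \<le> card (sols a (inverse (a + g)))"
    by (intro card_sols_geI)
  moreover have "card {y, y + (g + 1) * i} = 2"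
    using \<open>i \<notin> F4\<close> by simp
  ultimately show ?thesis
    by simp
qed

lemma exists_three_sols:
  assumes "n mod 4 = 2"
  shows "\<exists>a b. 3 \<le> card (sols a b)"
  using exists_artin_schreier_shift_not_F4[OF assms] three_sols_of_shift by blast

lemma four_sols_of_root:
  assumes "a ^ 2 + a = g + 1"
  shows "4 \<le> card (sols a (inverse (a + g)))"
proof -
  have "a ^ 2 = g + 1 + a"
    using assms add_right_eq_iff[of "a ^ 2" a "g + 1"] by blast
  then have sq: "a * a = a + g + 1"
    by (simp add: power2_eq_square add_ac)
  then have sq': "a * (a * x) = a * x + g * x + x" for x
    by (simp add: distrib_right flip: mult.assoc)
  have a_notin: "a \<notin> F4"
    using sq by (auto simp: F4_simps)
  then have "a + g \<noteq> 0"
    by (auto simp: add_eq_0_iff_eq)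
  define b where "b = inverse (a + g)"
  have b: "b * (a + g) = 1"
    using \<open>a + g \<noteq> 0\<close> by (simp add: b_def)
  have "card {a, g} + card {g + 1, g * a + g} \<le> card (sols a b)"
  proof (rule card_sols_geI)
    have "b * a = b * ((a + g) * (a + g))"
      by (simp add: F4_simps sq)
    also have "\<dots> = a + g"
      by (simp add: b flip: mult.assoc)
    finally show "{a, g} \<subseteq> sols a b \<inter> exceptional a"
      using b exceptional_sols_iff[OF a_notin, of b] by (simp add: exceptional_def)
    show "{g + 1, g * a + g} \<subseteq> sols a b - exceptional a"
      unfolding generic_sols_eq_reduced_roots[OF a_notin b]
      by (simp add: reduced_poly_def power2_eq_square F4_simps sq sq')
  qed
  moreover have "card {a, g} = 2" "card {g + 1, g * a + g} = 2"
    using a_notin by (auto simp: g_mult_eq_1_iff)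
  ultimately show ?thesis
    unfolding b_def by linarith
qed

lemma exists_four_sols:
  assumes "n mod 4 = 0"
  shows "\<exists>a b. 4 \<le> card (sols a b)"
proof -
  obtain a where "a ^ 2 + a = g + 1"
    using abs_trace_F4[of "g + 1"] assms artin_schreier_iff by force
  then show ?thesis
    using four_sols_of_root by blast
qed

lemma five_sols_of_F16:
  assumes F16: "a ^ 2 = g * a + 1" and z: "z ^ 2 + z = a * g"
  shows "5 \<le> card (sols a a)"
proof -
  have roots: "reduced_poly a ((g * a + 1) * w) = 0" if "w \<in> {z, z + 1}" for w
  proof -
    have "w ^ 2 + w = a * g"
      using that z artin_schreier_fiber[OF CHAR_2, of z] by auto
    then show ?thesis
      by (simp add: reduced_poly_F16[OF F16])
  qed
  have "card {0, g, a + 1} + card ((\<lambda>w. (g * a + 1) * w) ` {z, z + 1}) \<le> card (sols a a)"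
  proof (rule card_sols_geI)
    show "{0, g, a + 1} \<subseteq> sols a a \<inter> exceptional a"
      using F16_exceptional_sols[OF F16] by (auto simp: exceptional_def)
    show "(\<lambda>w. (g * a + 1) * w) ` {z, z + 1} \<subseteq> sols a a - exceptional a"
      using roots generic_sols_eq_reduced_roots[OF F16_not_F4[OF F16] F16_inverse[OF F16]] by auto
  qed
  moreover have "a + 1 \<noteq> 0" "a + 1 \<noteq> g"
    using F16_not_F4[OF F16] by (auto simp: add_right_eq_iff add.commute[of 1 g])
  then have "card {0, g, a + 1} = 3"
    by simp
  moreover have "card ((\<lambda>w. (g * a + 1) * w) ` {z, z + 1}) = 2"
    using F16_rules(3)[OF F16] by simp
  ultimately show ?thesis
    by linarith
qed

lemma exists_five_sols:
  assumes "n mod 8 = 0"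
  shows "\<exists>a. 5 \<le> card (sols a a)"
proof -
  obtain u where u: "u ^ 2 + u = g"
    using abs_trace_F4[of g] assms artin_schreier_iff by force
  have "u * u = g + u"
    using u by (metis add_right_eq_iff power2_eq_square)
  then have "u * (u * x) = g * x + u * x" for x
    by (simp add: distrib_right flip: mult.assoc)
  then have F16: "(g * u) ^ 2 = g * (g * u) + 1"
    using \<open>u * u = g + u\<close> by (simp add: power2_eq_square F4_simps)
  obtain z where "z ^ 2 + z = g * u * g"
    using abs_trace_F16[OF F16] assms artin_schreier_iff by force
  then show ?thesis
    using five_sols_of_F16[OF F16] by blast
qed

lemma cDU_F_g:
  shows "n mod 4 = 2 \<Longrightarrow> cDU F g = 3"
    and "n mod 8 = 4 \<Longrightarrow> cDU F g = 4"
    and "n mod 8 = 0 \<Longrightarrow> cDU F g = 5"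
proof -
  have cDU: "cDU F g = m" if "\<And>a b. card (sols a b) \<le> m" and "\<exists>a b. m \<le> card (sols a b)" for m
    using that by (auto intro: cDU_eqI simp: cDelta_eq_card_sols)
  show "cDU F g = 3" if "n mod 4 = 2"
    using card_sols_le_3[OF that] exists_three_sols[OF that] by (rule cDU)
  show "cDU F g = 4" if "n mod 8 = 4"
  proof -
    have "n mod 4 = 0"
      using that by presburger
    then show ?thesis
      using card_sols_le_4[OF that] exists_four_sols by (intro cDU)
  qed
  show "cDU F g = 5" if "n mod 8 = 0"
    using card_sols_le_5 exists_five_sols[OF that] by (intro cDU) blast+
qed

end

theorem mainTheorem10:
  fixes n :: nat and g c :: "'a::{field,finite}"
  assumes "card (UNIV :: 'a set) = 2 ^ n"
    and "even n" and "n \<ge> 4"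
    and "g ^ 4 = g" and "g \<noteq> 0" and "g \<noteq> 1"
    and "c ^ 4 = c" and "c \<noteq> 0" and "c \<noteq> 1"
  shows "(n mod 4 = 2 \<longrightarrow> cDU (Inv n \<circ> cyc3 g) c = 3)
       \<and> (n mod 8 = 4 \<longrightarrow> cDU (Inv n \<circ> cyc3 g) c = 4)
       \<and> (n mod 8 = 0 \<longrightarrow> cDU (Inv n \<circ> cyc3 g) c = 5)"
proof -
  have char2: "CHAR('a) = 2"
    using CHAR_eq_2_if_card_pow2[OF assms(1)] assms(3) by simp
  interpret inverse_cycle3 g n
    using assms F4_generator_square[OF char2] by unfold_locales auto
  have "c = g \<or> c = inverse g"
    using F4_generator_cases F4_generator_square[OF char2 assms(7-9)] inverse_g by simp
  then have "cDU F c = cDU F g"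
    using cDU_inverse[OF char2, of g F] by auto
  then show ?thesis
    using cDU_F_g by (simp add: Inv_comp_cyc3)
qed

end
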